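(* Let $n>d>0$, let $\mathfrak{C}_d([n])$ be the set of all chordal $d$-uniform clutters on $[n]$, and let $i\in\{1,\ldots,n-d\}$. Write $\alpha_k(n,d)=\sum_{j=k}^{n-d+1}(-1)^{j-k}\binom{n}{d+j-1}\binom{j}{k}$ for $1\le k\le n-d$. Then: (a) $\max\{\lambda_i(\mathcal{C}): \mathcal{C}\in\mathfrak{C}_d([n]),\ \mathcal{C}\neq\mathcal{C}_{n,d}\}=\alpha_i(n,d)+\binom{n-1-i}{d-1}$; (b) if $l_0,\ldots,l_{n-d}$ is an $M$-sequence with $l_1\le d$ and $\lambda_{n-d-k}=\alpha_{n-d-k}(n,d)+l_k-l_{k+1}$ for $k=0,\ldots,n-d-1$, then $\lambda_i=\alpha_i(n,d)+\binom{n-1-i}{d-1}$ if and only if $l_{n-d-j}=\binom{n-1-j}{d-1}$ for all $j$ with $i\le j\le n-d$ and $l_{n-d-j}=0$ for all $j$ with $0\le j<i$.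
   Context: A $d$-uniform clutter on $[n]$ is a set of $d$-subsets of $[n]$; $\mathcal{C}_{n,d}$ is the set of all $d$-subsets. Submaximal circuit: a $(d-1)$-set contained in some circuit. Clique: a set all of whose $d$-subsets are circuits. $\mathrm{N}_{\mathcal{C}}(e)=\{c: e\cup\{c\}\in\mathcal{C}\}$, $\mathrm{N}_{\mathcal{C}}[e]=e\cup\mathrm{N}_{\mathcal{C}}(e)$; $e$ is simplicial if it is a submaximal circuit and $\mathrm{N}_{\mathcal{C}}[e]$ is a clique. $\mathcal{C}\setminus e=\{F\in\mathcal{C}:e\not\subset F\}$; $\mathcal{C}_{e_1\cdots e_i}$ is successive deletion. A simplicial order is a sequence $e_1,\ldots,e_r$ with $e_i$ simplicial in $\mathcal{C}_{e_1\cdots e_{i-1}}$ (in $\mathcal{C}$ for $i=1$) and $\mathcal{C}_{e_1\cdots e_r}=\emptyset$; $\mathcal{C}$ is chordal if one exists. Its multiset is $\{N_1,\ldots,N_r\}$, $N_i=|\mathrm{N}_{\mathcal{C}_{e_1\cdots e_{i-1}}}(e_i)|$ (independent of the order), and $\lambda_i(\mathcal{C})=|\{j:N_j=i\}|$. $M$-sequence: $l_0=1$ and $0\le l_{i+1}\le l_i^{\langle i\rangle}$ for $i\ge1$, where for $a=\binom{a(i)}{i}+\cdots+\binom{a(j)}{j}$ (Macaulay representation, $a(i)>\cdots>a(j)\ge j\ge1$) one sets $a^{\langle i\rangle}=\binom{a(i)+1}{i+1}+\cdots+\binom{a(j)+1}{j+1}$, $0^{\langle i\rangle}=0$. *)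

theory Defs
  imports Main
begin

definition all_dsets :: "nat \<Rightarrow> nat \<Rightarrow> nat set set" where
  "all_dsets n d = {F. F \<subseteq> {1..n} \<and> card F = d}"

definition uniform_clutter :: "nat \<Rightarrow> nat \<Rightarrow> nat set set \<Rightarrow> bool" where
  "uniform_clutter n d C \<longleftrightarrow> C \<subseteq> all_dsets n d"

definition submax_circuit :: "nat \<Rightarrow> nat set set \<Rightarrow> nat set \<Rightarrow> bool" where
  "submax_circuit d C e \<longleftrightarrow> finite e \<and> card e = d - 1 \<and> (\<exists>F\<in>C. e \<subseteq> F)"

definition is_clique :: "nat \<Rightarrow> nat set set \<Rightarrow> nat set \<Rightarrow> bool" where
  "is_clique d C S \<longleftrightarrow> (\<forall>F. F \<subseteq> S \<and> finite F \<and> card F = d \<longrightarrow> F \<in> C)"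

definition open_nbhd :: "nat set set \<Rightarrow> nat set \<Rightarrow> nat set" where
  "open_nbhd C e = {c. e \<union> {c} \<in> C}"

definition closed_nbhd :: "nat set set \<Rightarrow> nat set \<Rightarrow> nat set" where
  "closed_nbhd C e = e \<union> open_nbhd C e"

definition simplicial :: "nat \<Rightarrow> nat set set \<Rightarrow> nat set \<Rightarrow> bool" where
  "simplicial d C e \<longleftrightarrow> submax_circuit d C e \<and> is_clique d C (closed_nbhd C e)"

definition del :: "nat set set \<Rightarrow> nat set \<Rightarrow> nat set set" where
  "del C e = {F \<in> C. \<not> e \<subseteq> F}"

definition dels :: "nat set set \<Rightarrow> nat set list \<Rightarrow> nat set set" where
  "dels C es = foldl del C es"

definition simplicial_order :: "nat \<Rightarrow> nat set set \<Rightarrow> nat set list \<Rightarrow> bool" where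
  "simplicial_order d C es \<longleftrightarrow>
     (\<forall>i < length es. simplicial d (dels C (take i es)) (es ! i)) \<and> dels C es = {}"

definition chordal :: "nat \<Rightarrow> nat set set \<Rightarrow> bool" where
  "chordal d C \<longleftrightarrow> (\<exists>es. simplicial_order d C es)"

definition chordal_clutter :: "nat \<Rightarrow> nat \<Rightarrow> nat set set \<Rightarrow> bool" where
  "chordal_clutter n d C \<longleftrightarrow> uniform_clutter n d C \<and> chordal d C"

(* N_i for a given order (0-based index i) *)
definition order_N :: "nat set set \<Rightarrow> nat set list \<Rightarrow> nat \<Rightarrow> nat" where
  "order_N C es i = card (open_nbhd (dels C (take i es)) (es ! i))"

(* lambda_k(C), computed from a (chosen) simplicial order; the multiset is order-independent *)
definition lam :: "nat \<Rightarrow> nat set set \<Rightarrow> nat \<Rightarrow> nat" where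
  "lam d C k = (let es = (SOME es. simplicial_order d C es) in
                 card {j. j < length es \<and> order_N C es j = k})"

definition alpha :: "nat \<Rightarrow> nat \<Rightarrow> nat \<Rightarrow> int" where
  "alpha k n d = (\<Sum>j = k..n - d + 1. (-1) ^ (j - k) * int (n choose (d + j - 1)) * int (j choose k))"

(* Macaulay representation of a w.r.t. i: the list [a(i), a(i-1), ..., a(j)] with
   a(i) > ... > a(j) >= j >= 1 and a = sum binom(a(t), t). *)
definition macaulay_rep :: "nat \<Rightarrow> nat \<Rightarrow> nat list \<Rightarrow> bool" where
  "macaulay_rep a i as \<longleftrightarrow> as \<noteq> [] \<and> length as \<le> i \<and> sorted_wrt (>) as \<and>
     last as \<ge> i + 1 - length as \<and> a = (\<Sum>t < length as. (as ! t) choose (i - t))"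

definition mac_upper :: "nat \<Rightarrow> nat \<Rightarrow> nat" where
  "mac_upper a i = (if a = 0 then 0 else
     (let as = (THE as. macaulay_rep a i as) in
        \<Sum>t < length as. (as ! t + 1) choose (i - t + 1)))"

definition M_sequence :: "(nat \<Rightarrow> nat) \<Rightarrow> nat \<Rightarrow> bool" where
  "M_sequence l m \<longleftrightarrow> l 0 = 1 \<and> (\<forall>i. 1 \<le> i \<and> i + 1 \<le> m \<longrightarrow> l (i + 1) \<le> mac_upper (l i) i)"

end

theory Submission
  imports Defs "HOL-Library.Multiset" "HOL-Library.Function_Algebras"
    "HOL-Computational_Algebra.Polynomial" "HOL-Library.Nat_Bijection"
begin

text \<open>
  Let \<open>e\<^sub>1, \<dots>, e\<^sub>r\<close> be a simplicial order. The closed neighbourhoods \<open>N[e\<^sub>j]\<close> with \<open>N\<^sub>j = i\<close> are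
  cliques of size \<open>d - 1 + i\<close> containing \<open>e\<^sub>j\<close> but no earlier \<open>e\<^sub>s\<close>, so the pairs
  \<open>(e\<^sub>j, [n] - N[e\<^sub>j])\<close> form a skew cross-intersecting family, and Frankl's skew version of
  Bollobas' theorem gives \<open>\<lambda>\<^sub>i \<le> (n - i) choose (d - 1)\<close>. The bound is attained by the clutter of
  all \<open>d\<close>-sets meeting the top \<open>i\<close> elements of \<open>[n]\<close>: deleting the \<open>(d-1)\<close>-sets in colex order is
  a simplicial order, and every \<open>g \<union> {n-i+1..n}\<close> with \<open>g\<close> a \<open>(d-1)\<close>-subset of \<open>[n-i]\<close> occurs as
  some \<open>N[e\<^sub>j]\<close>. An alternating binomial sum identifies the bound with
  \<open>\<alpha>\<^sub>i + (n - 1 - i) choose (d - 1)\<close>.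

  For (b), Macaulay's bound and \<open>l\<^sub>1 \<le> d\<close> give \<open>l\<^sub>k \<le> (d - 1 + k) choose k\<close>; strict inequality and
  vanishing both propagate upwards, so \<open>l\<^sub>r - l\<^bsub>r+1\<^esub> = (d - 1 + r) choose r\<close> holds exactly when \<open>l\<close>
  is maximal up to \<open>r\<close> and zero afterwards.
\<close>

section \<open>Skew version of Bollobas' theorem\<close>

definition scale_fun :: "real \<Rightarrow> ('a \<Rightarrow> real) \<Rightarrow> 'a \<Rightarrow> real" where
  "scale_fun r f = (\<lambda>x. r * f x)"

interpretation fun_vs: vector_space "scale_fun :: real \<Rightarrow> ('a \<Rightarrow> real) \<Rightarrow> 'a \<Rightarrow> real"
  by unfold_locales (auto simp: scale_fun_def fun_eq_iff algebra_simps)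

lemma sum_fun_apply: "(\<Sum>i\<in>S. f i) x = (\<Sum>i\<in>S. f i x)"
  by (induction S rule: infinite_finite_induct) auto

lemma triangular_funs_independent:
  fixes G :: "'i::linorder \<Rightarrow> 'a \<Rightarrow> real"
  assumes fin: "finite I"
    and below: "\<And>s t. s \<in> I \<Longrightarrow> t \<in> I \<Longrightarrow> s < t \<Longrightarrow> G t (x s) = 0"
    and diag: "\<And>t. t \<in> I \<Longrightarrow> G t (x t) \<noteq> 0"
  shows "inj_on G I" and "fun_vs.independent (G ` I)"
proof -
  show inj: "inj_on G I"
  proof (rule inj_onI)
    fix s t assume st: "s \<in> I" "t \<in> I" "G s = G t"
    have "G s \<noteq> G t" if "s \<in> I" "t \<in> I" "s < t" for s t
      using below[OF that] diag[of s] that by auto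
    from this[of s t] this[of t s] st show "s = t"
      by (cases s t rule: linorder_cases) auto
  qed
  show "fun_vs.independent (G ` I)"
  proof (rule fun_vs.independent_if_scalars_zero)
    fix f
    assume comb: "(\<Sum>y\<in>G ` I. scale_fun (f y) y) = 0"
    have comb_at: "(\<Sum>u\<in>I. f (G u) * G u (x s)) = 0" for s
    proof -
      have "(\<Sum>u\<in>I. scale_fun (f (G u)) (G u)) = 0"
        using comb by (simp add: sum.reindex[OF inj])
      then have "(\<Sum>u\<in>I. scale_fun (f (G u)) (G u)) (x s) = 0" by simp
      then show ?thesis by (simp add: sum_fun_apply scale_fun_def)
    qed
    show "f g = 0" if "g \<in> G ` I" for g
    proof (rule ccontr)
      assume "f g \<noteq> 0"
      define Z where "Z = {t \<in> I. f (G t) \<noteq> 0}"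
      have Z: "finite Z" "Z \<noteq> {}"
        using fin \<open>g \<in> G ` I\<close> \<open>f g \<noteq> 0\<close> by (auto simp: Z_def)
      define t where "t = Min Z"
      have t: "t \<in> I" "f (G t) \<noteq> 0"
        using Min_in[OF Z] by (simp_all add: t_def Z_def)
      have t_min: "f (G u) = 0" if "u \<in> I" "u < t" for u
        using Min_le[OF Z(1), of u] that unfolding t_def Z_def by force
      \<comment> \<open>at \<open>x t\<close>, terms before \<open>t\<close> vanish by minimality and terms after \<open>t\<close> by triangularity\<close>
      have "(\<Sum>u\<in>I. f (G u) * G u (x t)) = f (G t) * G t (x t)"
      proof (rule sum.remove[OF fin t(1), THEN trans])
        have "f (G u) * G u (x t) = 0" if "u \<in> I - {t}" for u
          using that t_min below[OF t(1)] by (cases u t rule: linorder_cases) auto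
        then show "f (G t) * G t (x t) + (\<Sum>u\<in>I - {t}. f (G u) * G u (x t))
            = f (G t) * G t (x t)"
          by (simp add: sum.neutral)
      qed
      then show False using comb_at[of t] diag[OF t(1)] t(2) by simp
    qed
  qed (use fin in simp)
qed

definition coeff_eval :: "nat \<Rightarrow> real \<Rightarrow> (nat \<Rightarrow> real) \<Rightarrow> real" where
  "coeff_eval a y c = (\<Sum>k\<le>a. c k * y ^ k)"

definition monomial_fun :: "nat multiset \<Rightarrow> (nat \<Rightarrow> real) \<Rightarrow> real" where
  "monomial_fun X c = prod_mset (image_mset c X)"

lemma poly_eq_coeff_eval:
  fixes p :: "real poly"
  assumes "degree p \<le> a"
  shows "poly p y = coeff_eval a y (coeff p)"
proof -
  have "poly p y = (\<Sum>i\<le>degree p. coeff p i * y ^ i)" by (rule poly_altdef)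
  also have "\<dots> = (\<Sum>i\<le>a. coeff p i * y ^ i)"
    by (rule sum.mono_neutral_left) (use assms in \<open>auto simp: coeff_eq_0\<close>)
  finally show ?thesis by (simp add: coeff_eval_def)
qed

lemma coeff_eval_mult_in_span:
  assumes "f \<in> fun_vs.span (monomial_fun ` multisets_of_size {0..a} b)"
  shows "(\<lambda>c. coeff_eval a y c * f c)
    \<in> fun_vs.span (monomial_fun ` multisets_of_size {0..a} (Suc b))"
  using assms
proof (induction rule: fun_vs.span_induct_alt)
  case base
  then show ?case by (simp add: fun_vs.span_zero[unfolded zero_fun_def])
next
  case (step r g h)
  let ?S = "fun_vs.span (monomial_fun ` multisets_of_size {0..a} (Suc b))"
  from step(1) obtain X where X: "X \<in> multisets_of_size {0..a} b" and g: "g = monomial_fun X"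
    by auto
  have "(\<lambda>c. coeff_eval a y c * g c) = (\<Sum>k\<le>a. scale_fun (y ^ k) (monomial_fun (add_mset k X)))"
    by (auto simp: fun_eq_iff g coeff_eval_def monomial_fun_def scale_fun_def sum_fun_apply
        sum_distrib_left mult_ac)
  also have "\<dots> \<in> ?S"
    using X by (intro fun_vs.span_sum fun_vs.span_scale fun_vs.span_base)
      (auto simp: multisets_of_size_def)
  finally have "(\<lambda>c. coeff_eval a y c * g c) \<in> ?S" .
  moreover have "(\<lambda>c. coeff_eval a y c * (scale_fun r g + h) c)
      = scale_fun r (\<lambda>c. coeff_eval a y c * g c) + (\<lambda>c. coeff_eval a y c * h c)"
    by (auto simp: scale_fun_def fun_eq_iff algebra_simps)
  ultimately show ?case
    using step.IH by (auto intro!: fun_vs.span_add fun_vs.span_scale)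
qed

lemma prod_coeff_eval_in_span:
  assumes "finite B"
  shows "(\<lambda>c. \<Prod>y\<in>B. coeff_eval a (g y) c)
    \<in> fun_vs.span (monomial_fun ` multisets_of_size {0..a} (card B))"
  using assms
proof (induction B rule: finite_induct)
  case empty
  have "monomial_fun {#} = (\<lambda>c. 1)" by (auto simp: monomial_fun_def)
  then show ?case by (auto intro!: fun_vs.span_base)
next
  case (insert y B)
  then show ?case using coeff_eval_mult_in_span[OF insert.IH] by simp
qed

text \<open>
  Frankl's skew version of Bollobas' theorem, by the polynomial method: the polynomial
  \<open>\<Prod>y\<in>B t. \<Prod>x\<in>A. (y - x)\<close> in the coefficients of a degree-\<open>a\<close> polynomial with root set \<open>A\<close>
  vanishes at the polynomial of \<open>A s\<close> iff \<open>A s\<close> meets \<open>B t\<close>; these polynomials are therefore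
  independent and lie in the space of forms of degree \<open>b\<close> in \<open>a + 1\<close> variables.
\<close>

theorem skew_bollobas:
  fixes A B :: "'i::linorder \<Rightarrow> nat set"
  assumes "finite I"
    and AB: "\<And>t. t \<in> I \<Longrightarrow>
      finite (A t) \<and> card (A t) = a \<and> finite (B t) \<and> card (B t) = b \<and> A t \<inter> B t = {}"
    and skew: "\<And>s t. s \<in> I \<Longrightarrow> t \<in> I \<Longrightarrow> s < t \<Longrightarrow> A s \<inter> B t \<noteq> {}"
  shows "card I \<le> (a + b) choose a"
proof -
  define p where "p s = (\<Prod>x\<in>A s. [:- real x, 1:])" for s
  define G where "G t = (\<lambda>c. \<Prod>y\<in>B t. coeff_eval a (real y) c)" for t
  have G_at: "G t (coeff (p s)) = (\<Prod>y\<in>B t. \<Prod>x\<in>A s. (real y - real x))" if "s \<in> I" for s t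
  proof -
    have "degree (p s) \<le> card (A s)"
      unfolding p_def using AB[OF that] by (intro degree_prod_sum_le[THEN order_trans]) auto
    then have "coeff_eval a (real y) (coeff (p s)) = poly (p s) (real y)" for y
      using AB[OF that] poly_eq_coeff_eval by simp
    then show ?thesis by (simp add: G_def p_def poly_prod)
  qed
  have zero_iff: "G t (coeff (p s)) = 0 \<longleftrightarrow> A s \<inter> B t \<noteq> {}" if "s \<in> I" "t \<in> I" for s t
    using AB[OF that(1)] AB[OF that(2)] by (auto simp: G_at[OF that(1)] prod_zero_iff)
  have below: "G t (coeff (p s)) = 0" if "s \<in> I" "t \<in> I" "s < t" for s t
    using zero_iff skew that by simp
  have diag: "G t (coeff (p t)) \<noteq> 0" if "t \<in> I" for t
    using zero_iff AB that by simp
  note indep = triangular_funs_independent[of I G "\<lambda>s. coeff (p s)", OF \<open>finite I\<close> below diag]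
  have "G t \<in> fun_vs.span (monomial_fun ` multisets_of_size {0..a} b)" if "t \<in> I" for t
    using prod_coeff_eval_in_span[of "B t" a real] AB[OF that] unfolding G_def by simp
  then have "G ` I \<subseteq> fun_vs.span (monomial_fun ` multisets_of_size {0..a} b)"
    by blast
  then have "card (G ` I) \<le> card (monomial_fun ` multisets_of_size {0..a} b)"
    using fun_vs.independent_span_bound[OF _ indep(2)] by (simp add: finite_multisets_of_size)
  also have "\<dots> \<le> card (multisets_of_size {0..a} b)"
    by (rule card_image_le) (simp add: finite_multisets_of_size)
  finally show ?thesis
    using indep(1) by (simp add: card_image card_multisets_of_size binomial_symmetric[of a "a + b"])
qed

section \<open>Simplicial orders of uniform clutters\<close>

text \<open>
  For a simplicial order \<open>es\<close>, \<open>stage C es j\<close> is the clutter before deleting \<open>es ! j\<close> and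
  \<open>nbhd_at C es j\<close> is the closed neighbourhood of \<open>es ! j\<close> in it (indices start at \<open>0\<close>).
\<close>

abbreviation stage :: "nat set set \<Rightarrow> nat set list \<Rightarrow> nat \<Rightarrow> nat set set" where
  "stage C es j \<equiv> dels C (take j es)"

abbreviation nbhd_at :: "nat set set \<Rightarrow> nat set list \<Rightarrow> nat \<Rightarrow> nat set" where
  "nbhd_at C es j \<equiv> closed_nbhd (stage C es j) (es ! j)"

lemma dels_Nil [simp]: "dels C [] = C"
  by (simp add: dels_def)

lemma dels_subset: "dels C es \<subseteq> C"
proof (induction es arbitrary: C)
  case (Cons e es)
  then show ?case by (force simp: dels_def del_def)
qed simp

lemma stage_Suc: "j < length es \<Longrightarrow> stage C es (Suc j) = del (stage C es j) (es ! j)"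
  by (simp add: dels_def take_Suc_conv_app_nth)

lemma stage_antimono:
  assumes "j \<le> k"
  shows "stage C es k \<subseteq> stage C es j"
proof -
  have "take k es = take j es @ take (k - j) (drop j es)"
    using take_add[of j "k - j" es] assms by simp
  then show ?thesis using dels_subset by (simp add: dels_def)
qed

lemma open_nbhd_subset: "X \<subseteq> all_dsets n d \<Longrightarrow> open_nbhd X e \<subseteq> {1..n}"
  by (auto simp: open_nbhd_def all_dsets_def)

lemma open_nbhd_disjoint:
  assumes "X \<subseteq> all_dsets n d" "finite e" "card e = d - 1" "0 < d"
  shows "e \<inter> open_nbhd X e = {}"
proof -
  have "card (e \<union> {c}) = d" if "c \<in> open_nbhd X e" for c
    using that assms(1) by (auto simp: open_nbhd_def all_dsets_def)
  then show ?thesis using assms(2-4) by (fastforce simp: insert_absorb)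
qed

lemma closed_nbhd_uniform:
  assumes "X \<subseteq> all_dsets n d" "e \<subseteq> {1..n}" "card e = d - 1" "0 < d"
  shows "finite (closed_nbhd X e)" "closed_nbhd X e \<subseteq> {1..n}"
    and "card (closed_nbhd X e) = d - 1 + card (open_nbhd X e)"
proof -
  have fin: "finite e" "finite (open_nbhd X e)"
    using finite_subset[OF assms(2)] finite_subset[OF open_nbhd_subset[OF assms(1)]] by auto
  show "finite (closed_nbhd X e)" "closed_nbhd X e \<subseteq> {1..n}"
    using fin assms(1,2) open_nbhd_subset by (auto simp: closed_nbhd_def)
  show "card (closed_nbhd X e) = d - 1 + card (open_nbhd X e)"
    using card_Un_disjoint[OF fin open_nbhd_disjoint[OF assms(1) fin(1) assms(3,4)]] assms(3)
    by (simp add: closed_nbhd_def)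
qed

locale uniform_simplicial_order =
  fixes n d :: nat and C :: "nat set set" and es :: "nat set list"
  assumes uniform: "C \<subseteq> all_dsets n d" and d_pos: "0 < d" and order: "simplicial_order d C es"
begin

lemma stage_uniform: "stage C es j \<subseteq> all_dsets n d"
  using dels_subset uniform by blast

lemma simplicial_stage: "j < length es \<Longrightarrow> simplicial d (stage C es j) (es ! j)"
  using order by (simp add: simplicial_order_def)

lemma elem_uniform:
  assumes "j < length es"
  shows "es ! j \<subseteq> {1..n}" "finite (es ! j)" "card (es ! j) = d - 1"
proof -
  obtain F where F: "F \<in> stage C es j" "es ! j \<subseteq> F" and "card (es ! j) = d - 1"
    using simplicial_stage[OF assms] by (auto simp: simplicial_def submax_circuit_def)
  moreover have "F \<in> all_dsets n d"
    using F(1) stage_uniform by blast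
  ultimately show sub: "es ! j \<subseteq> {1..n}" and "card (es ! j) = d - 1"
    by (auto simp: all_dsets_def)
  show "finite (es ! j)"
    using sub by (rule finite_subset) simp
qed

lemma nbhd_at_uniform:
  assumes "j < length es"
  shows "finite (nbhd_at C es j)" "nbhd_at C es j \<subseteq> {1..n}"
    and "card (nbhd_at C es j) = d - 1 + order_N C es j"
  using closed_nbhd_uniform[OF stage_uniform elem_uniform(1,3)[OF assms] d_pos]
  by (simp_all add: order_N_def)

lemma nbhd_at_clique: "j < length es \<Longrightarrow> is_clique d C (nbhd_at C es j)"
  using simplicial_stage dels_subset unfolding simplicial_def is_clique_def by blast

text \<open>
  A clique with at least \<open>d\<close> elements lies in \<open>N[e\<^sub>j]\<close> for the first \<open>j\<close> whose deletion
  destroys one of its circuits.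
\<close>

lemma clique_in_nbhd_at:
  assumes K: "finite K" "d \<le> card K" "is_clique d C K"
  obtains j where "j < length es" "es ! j \<subseteq> K" "K \<subseteq> nbhd_at C es j"
proof -
  define P where "P j \<longleftrightarrow> (\<forall>F. F \<subseteq> K \<and> finite F \<and> card F = d \<longrightarrow> F \<in> stage C es j)" for j
  obtain F0 where "F0 \<subseteq> K" "card F0 = d" "finite F0"
    using obtain_subset_with_card_n[OF K(2)] by (metis finite_subset K(1))
  moreover have "stage C es (length es) = {}"
    using order by (simp add: simplicial_order_def)
  ultimately have "\<not> P (length es)" by (auto simp: P_def)
  moreover have "P 0" using K(3) by (simp add: P_def is_clique_def)
  ultimately obtain j where j: "j < length es" "P j" "\<not> P (Suc j)"
    using ex_least_nat_less[of "\<lambda>j. \<not> P j"] by auto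
  then obtain F where F: "F \<subseteq> K" "card F = d" "F \<in> stage C es j" "F \<notin> stage C es (Suc j)"
    by (auto simp: P_def)
  then have eF: "es ! j \<subseteq> F" using stage_Suc[OF j(1)] by (auto simp: del_def)
  have "insert c (es ! j) \<in> stage C es j" if "c \<in> K" "c \<notin> es ! j" for c
    using j(2) eF F(1) that elem_uniform(2,3)[OF j(1)] d_pos by (auto simp: P_def)
  then have "K \<subseteq> nbhd_at C es j"
    by (auto simp: closed_nbhd_def open_nbhd_def)
  with j(1) eF F(1) show ?thesis using that by blast
qed

text \<open>
  If \<open>e\<^sub>s \<subseteq> N[e\<^sub>t]\<close> for \<open>s < t\<close>, the clique \<open>N[e\<^sub>t]\<close> has more than \<open>d - 1\<close> elements, so
  some \<open>d\<close>-set \<open>e\<^sub>s \<union> {c}\<close> inside it would still be a circuit at stage \<open>t\<close>, although it was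
  deleted at stage \<open>s\<close>.
\<close>

lemma earlier_not_subset_nbhd_at:
  assumes st: "s < t" "t < length es" and "order_N C es t \<noteq> 0"
  shows "\<not> es ! s \<subseteq> nbhd_at C es t"
proof
  let ?K = "nbhd_at C es t"
  assume sub: "es ! s \<subseteq> ?K"
  have "card (es ! s) < card ?K"
    using nbhd_at_uniform(3)[OF st(2)] elem_uniform(3)[of s] assms by simp
  then have "\<not> ?K \<subseteq> es ! s"
    using card_mono[OF elem_uniform(2)[of s]] st by (meson leD less_trans)
  then obtain c where c: "c \<in> ?K" "c \<notin> es ! s" by blast
  let ?F = "insert c (es ! s)"
  have "card ?F = d" "finite ?F"
    using elem_uniform(2,3)[of s] c(2) st d_pos by auto
  then have "?F \<in> stage C es t"
    using simplicial_stage[OF st(2)] sub c(1) by (auto simp: simplicial_def is_clique_def)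
  moreover have "stage C es t \<subseteq> del (stage C es s) (es ! s)"
    using stage_antimono[of "Suc s" t C es] stage_Suc[of s es C] st by simp
  ultimately show False by (auto simp: del_def)
qed

text \<open>
  The sets \<open>e\<^sub>j\<close> and \<open>[n] - N[e\<^sub>j]\<close> with \<open>N\<^sub>j = i\<close> form a skew cross-intersecting family.
\<close>

lemma card_order_N_le:
  assumes "1 \<le> i"
  shows "card {j. j < length es \<and> order_N C es j = i} \<le> (n - i) choose (d - 1)"
proof (cases "{j. j < length es \<and> order_N C es j = i} = {}")
  case False
  define J where "J = {j. j < length es \<and> order_N C es j = i}"
  have J: "j < length es" "card (nbhd_at C es j) = d - 1 + i" if "j \<in> J" for j
    using that nbhd_at_uniform(3) by (auto simp: J_def)
  have "d - 1 + i \<le> n"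
    using False J card_mono[OF _ nbhd_at_uniform(2)] unfolding J_def[symmetric] by fastforce
  have "card J \<le> (d - 1 + (n - (d - 1 + i))) choose (d - 1)"
  proof (rule skew_bollobas[where A = "\<lambda>j. es ! j" and B = "\<lambda>j. {1..n} - nbhd_at C es j"])
    show "finite J" by (simp add: J_def)
    show "finite (es ! t) \<and> card (es ! t) = d - 1 \<and> finite ({1..n} - nbhd_at C es t)
        \<and> card ({1..n} - nbhd_at C es t) = n - (d - 1 + i)
        \<and> es ! t \<inter> ({1..n} - nbhd_at C es t) = {}"
      if "t \<in> J" for t
      using elem_uniform(2,3) J[OF that] card_Diff_subset[OF nbhd_at_uniform(1,2)]
      by (auto simp: closed_nbhd_def)
    show "es ! s \<inter> ({1..n} - nbhd_at C es t) \<noteq> {}" if "s \<in> J" "t \<in> J" "s < t" for s t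
      using earlier_not_subset_nbhd_at[of s t] elem_uniform(1)[of s] that assms
      by (auto simp: J_def)
  qed
  also have "d - 1 + (n - (d - 1 + i)) = n - i"
    using \<open>d - 1 + i \<le> n\<close> d_pos by simp
  finally show ?thesis by (simp add: J_def)
qed (metis card.empty le0)

end

lemma lam_eq_card_order_N:
  assumes "chordal d C"
  obtains es where "simplicial_order d C es"
    and "\<And>k. lam d C k = card {j. j < length es \<and> order_N C es j = k}"
proof
  show "simplicial_order d C (SOME es. simplicial_order d C es)"
    using assms by (simp add: chordal_def someI_ex)
qed (simp add: lam_def Let_def)

lemma lam_le:
  assumes "chordal_clutter n d C" "0 < d" "1 \<le> i"
  shows "lam d C i \<le> (n - i) choose (d - 1)"
proof -
  have "chordal d C" using assms(1) by (simp add: chordal_clutter_def)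
  then obtain es where "simplicial_order d C es"
    and "lam d C i = card {j. j < length es \<and> order_N C es j = i}"
    using lam_eq_card_order_N by metis
  moreover have "C \<subseteq> all_dsets n d"
    using assms(1) by (simp add: chordal_clutter_def uniform_clutter_def)
  ultimately show ?thesis
    using uniform_simplicial_order.card_order_N_le[of n d C] assms(2,3)
    by (simp add: uniform_simplicial_order_def)
qed

section \<open>Chordality by elimination in code order\<close>

lemma simplicial_order_Cons:
  assumes "simplicial d X e" "simplicial_order d (del X e) es"
  shows "simplicial_order d X (e # es)"
proof -
  have "dels X (take (Suc j) (e # es)) = dels (del X e) (take j es)" for j
    by (simp add: dels_def)
  then show ?thesis
    using assms by (auto simp: simplicial_order_def less_Suc_eq_0_disj dels_def)
qed

lemma chordal_empty: "chordal d {}"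
  unfolding chordal_def simplicial_order_def by (rule exI[of _ "[]"]) simp

lemma set_encode_less_power:
  assumes "finite e" "\<forall>x\<in>e. x < c"
  shows "set_encode e < 2 ^ c"
proof -
  have "set_encode e \<le> (\<Sum>x<c. (2::nat) ^ x)"
    unfolding set_encode_def using assms by (intro sum_mono2) auto
  also have "\<dots> < 2 ^ c"
    using mask_eq_sum_exp[where ?'a = nat, of c, symmetric]
      by (simp add: lessThan_def mask_eq_exp_minus_1)
  finally show ?thesis .
qed

lemma power_le_set_encode: "finite e \<Longrightarrow> c \<in> e \<Longrightarrow> 2 ^ c \<le> set_encode e"
  unfolding set_encode_def by (rule member_le_sum) auto

definition encode_deletion :: "nat \<Rightarrow> nat \<Rightarrow> nat set set \<Rightarrow> nat \<Rightarrow> nat set set" where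
  "encode_deletion n d W k =
     {F \<in> W. \<forall>e. e \<subseteq> {1..n} \<and> card e = d - 1 \<and> set_encode e < k \<longrightarrow> \<not> e \<subseteq> F}"

context
  fixes n d :: nat and W :: "nat set set"
  assumes W: "W \<subseteq> all_dsets n d" and d_pos: "0 < d"
begin

private abbreviation "D \<equiv> encode_deletion n d W"

lemma encode_deletion_uniform: "D k \<subseteq> all_dsets n d"
  using W by (auto simp: encode_deletion_def)

lemma encode_deletion_Suc:
  assumes "e \<subseteq> {1..n}" "card e = d - 1"
  shows "D (Suc (set_encode e)) = del (D (set_encode e)) e"
proof -
  have "finite e" using assms(1) by (rule finite_subset) simp
  then have "set_encode e' < Suc (set_encode e) \<longleftrightarrow> set_encode e' < set_encode e \<or> e' = e"
    if "e' \<subseteq> {1..n}" for e'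
    using set_encode_eq[of e' e] finite_subset[OF that] by auto
  then show ?thesis
    using assms unfolding encode_deletion_def del_def by blast
qed

lemma encode_deletion_cong:
  assumes "\<And>e. e \<subseteq> {1..n} \<Longrightarrow> card e = d - 1 \<Longrightarrow> set_encode e \<notin> {k..<k'}" "k \<le> k'"
  shows "D k = D k'"
proof -
  have "set_encode e < k \<longleftrightarrow> set_encode e < k'" if "e \<subseteq> {1..n}" "card e = d - 1" for e
    using assms(1)[OF that] assms(2) by auto
  then show ?thesis unfolding encode_deletion_def by blast
qed

lemma encode_deletion_empty:
  assumes "\<And>e. e \<subseteq> {1..n} \<Longrightarrow> card e = d - 1 \<Longrightarrow> set_encode e < k"
  shows "D k = {}"
proof -
  have "F \<notin> D k" if "F \<in> W" for F
  proof -
    have F: "F \<subseteq> {1..n}" "card F = d" using that W by (auto simp: all_dsets_def)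
    then obtain x where "x \<in> F" using d_pos by fastforce
    moreover have "finite F" using F(1) by (rule finite_subset) simp
    ultimately have "F - {x} \<subseteq> {1..n}" "card (F - {x}) = d - 1" "F - {x} \<subseteq> F"
      using F by auto
    with assms[OF this(1,2)] show ?thesis by (auto simp: encode_deletion_def)
  qed
  then show ?thesis using encode_deletion_def by blast
qed

text \<open>
  Minimality of the code of \<open>e\<close>: a neighbour \<open>c \<le> max e\<close> could be swapped for a larger element
  of \<open>e\<close>, producing a \<open>(d-1)\<close>-subset of \<open>e \<union> {c}\<close> with smaller code.
\<close>

lemma open_nbhd_encode_deletion_above:
  assumes e: "e \<subseteq> {1..n}" "card e = d - 1"
    and c: "c \<in> open_nbhd (D (set_encode e)) e" and "x \<in> e"
  shows "x < c"
proof (rule ccontr)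
  assume "\<not> x < c"
  have fe: "finite e" using e(1) by (rule finite_subset) simp
  have c_props: "c \<in> {1..n}" "c \<notin> e"
    using open_nbhd_subset[OF encode_deletion_uniform] c
      open_nbhd_disjoint[OF encode_deletion_uniform fe e(2) d_pos] by blast+
  with \<open>\<not> x < c\<close> \<open>x \<in> e\<close> have "c < x" by (cases "c = x") auto
  define e' where "e' = insert c (e - {x})"
  have "e' \<subseteq> {1..n}" using e(1) c_props \<open>x \<in> e\<close> by (auto simp: e'_def)
  moreover have "card e' = d - 1"
    using fe e(2) c_props \<open>x \<in> e\<close> card_gt_0_iff[of e] by (auto simp: e'_def card_Diff_singleton)
  moreover have "set_encode e' < set_encode e"
    using set_encode_insert[of "e - {x}" x] \<open>c < x\<close> fe c_props \<open>x \<in> e\<close>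
    by (simp add: e'_def insert_absorb)
  moreover have "e' \<subseteq> e \<union> {c}" by (auto simp: e'_def)
  moreover have "e \<union> {c} \<in> D (set_encode e)" using c by (simp add: open_nbhd_def)
  ultimately show False unfolding encode_deletion_def by blast
qed

lemma encode_deletion_simplicial:
  assumes e: "e \<subseteq> {1..n}" "card e = d - 1" and "\<exists>F \<in> D (set_encode e). e \<subseteq> F"
    and clique: "is_clique d W (closed_nbhd (D (set_encode e)) e)"
  shows "simplicial d (D (set_encode e)) e"
proof -
  let ?N = "open_nbhd (D (set_encode e)) e"
  have fe: "finite e" using e(1) by (rule finite_subset) simp
  have "F \<in> D (set_encode e)" if F: "F \<subseteq> e \<union> ?N" "finite F" "card F = d" for F
  proof -
    have "\<not> e' \<subseteq> F" if e': "e' \<subseteq> {1..n}" "card e' = d - 1" "set_encode e' < set_encode e" for e'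
    proof
      assume "e' \<subseteq> F"
      have "finite e'" using e'(1) by (rule finite_subset) simp
      show False
      proof (cases "e' \<subseteq> e")
        case True
        then show False using card_subset_eq[OF fe True] e'(2,3) e(2) by simp
      next
        \<comment> \<open>a neighbour \<open>c'\<close> in \<open>e'\<close> exceeds every element of \<open>e\<close>, so the code of \<open>e'\<close> is larger\<close>
        case False
        then obtain c' where "c' \<in> e'" "c' \<in> ?N" using \<open>e' \<subseteq> F\<close> F(1) by blast
        then have "set_encode e < 2 ^ c'"
          using set_encode_less_power[OF fe] open_nbhd_encode_deletion_above[OF e] by blast
        then show False
          using power_le_set_encode[OF \<open>finite e'\<close> \<open>c' \<in> e'\<close>] e'(3) by simp
      qed
    qed
    moreover have "F \<in> W" using clique F by (auto simp: is_clique_def closed_nbhd_def)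
    ultimately show ?thesis by (auto simp: encode_deletion_def)
  qed
  then show ?thesis
    using assms fe by (auto simp: simplicial_def submax_circuit_def is_clique_def closed_nbhd_def)
qed

lemma chordal_encode_deletion_Suc:
  assumes e: "e \<subseteq> {1..n}" "card e = d - 1"
    and clique: "is_clique d W (closed_nbhd (D (set_encode e)) e)"
    and "chordal d (D (Suc (set_encode e)))"
  shows "chordal d (D (set_encode e))"
proof -
  obtain es where es: "simplicial_order d (del (D (set_encode e)) e) es"
    using assms(4) unfolding chordal_def encode_deletion_Suc[OF e] by blast
  show ?thesis
  proof (cases "\<exists>F \<in> D (set_encode e). e \<subseteq> F")
    case True
    then have "simplicial_order d (D (set_encode e)) (e # es)"
      using simplicial_order_Cons encode_deletion_simplicial[OF e True clique] es by blast
    then show ?thesis by (auto simp: chordal_def)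
  next
    case False
    then have "del (D (set_encode e)) e = D (set_encode e)" by (auto simp: del_def)
    then show ?thesis using es by (auto simp: chordal_def)
  qed
qed

text \<open>
  Chordality criterion: the \<open>(d-1)\<close>-sets, taken in the order of their codes, form a simplicial
  order.
\<close>

lemma chordal_if_encode_deletion_cliques:
  assumes clique: "\<And>e. e \<subseteq> {1..n} \<Longrightarrow> card e = d - 1
      \<Longrightarrow> is_clique d W (closed_nbhd (D (set_encode e)) e)"
  shows "chordal d W"
proof -
  define R where "R k = {e. e \<subseteq> {1..n} \<and> card e = d - 1 \<and> k \<le> set_encode e}" for k
  have "chordal d (D k)" for k
  proof (induction "card (R k)" arbitrary: k rule: less_induct)
    case less
    have finR: "finite (R k)" unfolding R_def by (rule finite_subset[of _ "Pow {1..n}"]) auto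
    show ?case
    proof (cases "R k = {}")
      case True
      then have "D k = {}" by (intro encode_deletion_empty) (auto simp: R_def)
      then show ?thesis using chordal_empty by simp
    next
      case False
      obtain e where eR: "e \<in> R k" and e_min: "\<And>e'. e' \<in> R k \<Longrightarrow> set_encode e \<le> set_encode e'"
        using Min_in[of "set_encode ` R k"] Min_le[of "set_encode ` R k"] finR False by fastforce
      have e: "e \<subseteq> {1..n}" "card e = d - 1" "k \<le> set_encode e" using eR by (auto simp: R_def)
      have "set_encode e' \<notin> {k..<set_encode e}" if "e' \<subseteq> {1..n}" "card e' = d - 1" for e'
        using e_min[of e'] that by (auto simp: R_def)
      then have "D k = D (set_encode e)"
        using e(3) by (rule encode_deletion_cong)
      moreover have "R (Suc (set_encode e)) \<subseteq> R k" "e \<in> R k - R (Suc (set_encode e))"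
        using eR by (auto simp: R_def)
      then have "R (Suc (set_encode e)) \<subset> R k" by blast
      then have "chordal d (D (Suc (set_encode e)))"
        by (intro less psubset_card_mono[OF finR])
      ultimately show ?thesis
        using chordal_encode_deletion_Suc[OF e(1,2) clique[OF e(1,2)]] by simp
    qed
  qed
  from this[of 0] show ?thesis by (simp add: encode_deletion_def)
qed

end

section \<open>The extremal clutter\<close>

definition meets_top :: "nat \<Rightarrow> nat \<Rightarrow> nat \<Rightarrow> nat set set" where
  "meets_top n d i = {F \<in> all_dsets n d. F \<inter> {n - i + 1..n} \<noteq> {}}"

lemma meets_top_uniform: "meets_top n d i \<subseteq> all_dsets n d"
  by (simp add: meets_top_def)

lemma meets_top_chordal:
  assumes d: "0 < d"
  shows "chordal d (meets_top n d i)"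
proof (rule chordal_if_encode_deletion_cliques[OF meets_top_uniform d])
  fix e assume e: "e \<subseteq> {1..n}" "card e = d - 1"
  let ?X = "encode_deletion n d (meets_top n d i) (set_encode e)"
  have X: "?X \<subseteq> all_dsets n d"
    using encode_deletion_uniform[OF meets_top_uniform d] .
  show "is_clique d (meets_top n d i) (closed_nbhd ?X e)"
    unfolding is_clique_def
  proof (intro allI impI)
    fix F assume F: "F \<subseteq> closed_nbhd ?X e \<and> finite F \<and> card F = d"
    have "\<not> F \<subseteq> e"
      using F e(2) d card_mono[of e F] finite_subset[OF e(1)] by auto
    then obtain c where "c \<in> F" and c: "c \<in> open_nbhd ?X e"
      using F by (auto simp: closed_nbhd_def)
    have above: "x < c" if "x \<in> e" for x
      using open_nbhd_encode_deletion_above[OF meets_top_uniform d e c that] .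
    have "e \<union> {c} \<in> meets_top n d i"
      using c by (auto simp: open_nbhd_def encode_deletion_def)
    then have "(e \<union> {c}) \<inter> {n - i + 1..n} \<noteq> {}"
      by (simp add: meets_top_def)
    then obtain y where "y \<in> e \<union> {c}" "y \<in> {n - i + 1..n}"
      by blast
    \<comment> \<open>\<open>c\<close> exceeds every element of \<open>e\<close>, so it lies in the final segment whenever \<open>e \<union> {c}\<close> meets it\<close>
    then have "c \<in> {n - i + 1..n}"
      using above open_nbhd_subset[OF X] c by fastforce
    moreover have "F \<subseteq> {1..n}"
      using F closed_nbhd_uniform(2)[OF X e d] by blast
    ultimately show "F \<in> meets_top n d i"
      using F \<open>c \<in> F\<close> by (auto simp: meets_top_def all_dsets_def)
  qed
qed

context uniform_simplicial_order
begin

text \<open>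
  For \<open>C = meets_top n d i\<close>, every \<open>(d-1)\<close>-set \<open>g\<close> below the top \<open>i\<close> elements \<open>T\<close> yields
  the clique \<open>g \<union> T\<close>; it lies in some \<open>N[e\<^sub>j]\<close>, and equality holds because a clique of
  \<open>C\<close> contains at most \<open>d - 1\<close> elements outside \<open>T\<close>.
\<close>

lemma nbhd_at_meets_top:
  assumes C: "C = meets_top n d i" and i: "1 \<le> i" "i \<le> n - d"
    and g: "g \<subseteq> {1..n - i}" "card g = d - 1"
  obtains j where "j < length es" "nbhd_at C es j = g \<union> {n - i + 1..n}"
proof -
  let ?T = "{n - i + 1..n}" and ?B = "{1..n - i}"
  have fg: "finite g" using g(1) by (rule finite_subset) simp
  have disj: "g \<inter> ?T = {}" using g(1) by auto
  have clique: "is_clique d C (g \<union> ?T)"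
    unfolding is_clique_def
  proof (intro allI impI)
    fix F assume F: "F \<subseteq> g \<union> ?T \<and> finite F \<and> card F = d"
    have "\<not> F \<subseteq> g"
    proof
      assume "F \<subseteq> g"
      then have "card F \<le> card g" by (rule card_mono[OF fg])
      then show False using F g(2) d_pos by simp
    qed
    then have "F \<inter> ?T \<noteq> {}" using F by blast
    moreover have "?B \<union> ?T \<subseteq> {1..n}" by auto
    then have "g \<union> ?T \<subseteq> {1..n}" using g(1) by blast
    then have "F \<subseteq> {1..n}" using F by blast
    ultimately show "F \<in> C" using F by (simp add: C meets_top_def all_dsets_def)
  qed
  have "card (g \<union> ?T) = d - 1 + i"
    using card_Un_disjoint[OF fg finite_atLeastAtMost disj] g(2) i by simp
  then have "d \<le> card (g \<union> ?T)" using i(1) by simp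
  then obtain j where j: "j < length es" "g \<union> ?T \<subseteq> nbhd_at C es j"
    using clique_in_nbhd_at[OF finite_UnI[OF fg finite_atLeastAtMost] _ clique] by metis
  have fin: "finite (nbhd_at C es j \<inter> ?B)" by simp
  have "card (nbhd_at C es j \<inter> ?B) \<le> d - 1"
  proof (rule ccontr)
    assume "\<not> ?thesis"
    then have "d \<le> card (nbhd_at C es j \<inter> ?B)" by simp
    then obtain F where F: "F \<subseteq> nbhd_at C es j \<inter> ?B" "card F = d" "finite F"
      by (rule obtain_subset_with_card_n)
    then have "F \<in> C" using nbhd_at_clique[OF j(1)] by (auto simp: is_clique_def)
    moreover have "F \<inter> ?T = {}" using F(1) by auto
    ultimately show False by (simp add: C meets_top_def)
  qed
  moreover have "g \<subseteq> nbhd_at C es j \<inter> ?B" using j(2) g(1) by blast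
  ultimately have "g = nbhd_at C es j \<inter> ?B"
    using card_seteq[OF fin] g(2) by simp
  moreover have "nbhd_at C es j \<subseteq> ?B \<union> ?T" using nbhd_at_uniform(2)[OF j(1)] by auto
  ultimately have "nbhd_at C es j = g \<union> ?T" using j(2) by blast
  with j(1) show ?thesis using that by blast
qed

lemma card_order_N_meets_top:
  assumes C: "C = meets_top n d i" and i: "1 \<le> i" "i \<le> n - d"
  shows "(n - i) choose (d - 1) \<le> card {j. j < length es \<and> order_N C es j = i}"
proof -
  let ?T = "{n - i + 1..n}" and ?B = "{1..n - i}"
  define J where "J = {j. j < length es \<and> order_N C es j = i}"
  have "{g. g \<subseteq> ?B \<and> card g = d - 1} \<subseteq> (\<lambda>j. nbhd_at C es j \<inter> ?B) ` J"
  proof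
    fix g assume "g \<in> {g. g \<subseteq> ?B \<and> card g = d - 1}"
    then have g: "g \<subseteq> ?B" "card g = d - 1" by auto
    obtain j where j: "j < length es" "nbhd_at C es j = g \<union> ?T"
      using nbhd_at_meets_top[OF C i g] .
    have fg: "finite g" using g(1) by (rule finite_subset) simp
    have "g \<inter> ?T = {}" using g(1) by auto
    then have "card (nbhd_at C es j) = d - 1 + i"
      using j(2) card_Un_disjoint[OF fg] g(2) i by simp
    then have "j \<in> J" using j(1) nbhd_at_uniform(3)[OF j(1)] by (simp add: J_def)
    moreover have "g = nbhd_at C es j \<inter> ?B" using j(2) g(1) by auto
    ultimately show "g \<in> (\<lambda>j. nbhd_at C es j \<inter> ?B) ` J" by blast
  qed
  then have "card {g. g \<subseteq> ?B \<and> card g = d - 1} \<le> card ((\<lambda>j. nbhd_at C es j \<inter> ?B) ` J)"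
    by (rule card_mono[rotated]) (simp add: J_def)
  also have "\<dots> \<le> card J"
    by (rule card_image_le) (simp add: J_def)
  finally show ?thesis by (simp add: J_def n_subsets)
qed

end

lemma Max_lam:
  assumes d: "0 < d" "d < n" and i: "1 \<le> i" "i \<le> n - d"
  shows "Max {lam d C i | C. chordal_clutter n d C \<and> C \<noteq> all_dsets n d} = (n - i) choose (d - 1)"
proof (rule Max_eqI)
  have "finite (Pow (all_dsets n d))"
    by (rule finite_subset[of _ "Pow (Pow {1..n})"]) (auto simp: all_dsets_def)
  then show "finite {lam d C i | C. chordal_clutter n d C \<and> C \<noteq> all_dsets n d}"
    by (rule finite_subset[rotated, OF finite_imageI[of _ "\<lambda>C. lam d C i"]])
      (auto simp: chordal_clutter_def uniform_clutter_def)
  show "y \<le> (n - i) choose (d - 1)"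
    if "y \<in> {lam d C i | C. chordal_clutter n d C \<and> C \<noteq> all_dsets n d}" for y
    using that lam_le[OF _ d(1) i(1)] by auto
  let ?W = "meets_top n d i"
  have W: "chordal_clutter n d ?W"
    using meets_top_chordal[OF d(1)]
      by (simp add: chordal_clutter_def uniform_clutter_def meets_top_def)
  have "{1..d} \<in> all_dsets n d - ?W" using d i by (auto simp: all_dsets_def meets_top_def)
  then have "?W \<noteq> all_dsets n d" by blast
  moreover obtain es where "simplicial_order d ?W es"
    and "lam d ?W i = card {j. j < length es \<and> order_N ?W es j = i}"
    using lam_eq_card_order_N meets_top_chordal[OF d(1)] by metis
  then have "(n - i) choose (d - 1) \<le> lam d ?W i"
    using uniform_simplicial_order.card_order_N_meets_top[of n d ?W es i] d(1) i
    by (simp add: uniform_simplicial_order_def meets_top_uniform)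
  then have "lam d ?W i = (n - i) choose (d - 1)"
    using lam_le[OF W d(1) i(1)] by simp
  ultimately show
    "(n - i) choose (d - 1) \<in> {lam d C i | C. chordal_clutter n d C \<and> C \<noteq> all_dsets n d}"
    using W by force
qed

section \<open>An alternating binomial sum\<close>

definition alt_choose_sum :: "nat \<Rightarrow> nat \<Rightarrow> nat \<Rightarrow> int" where
  "alt_choose_sum n m i =
     (\<Sum>j = i..n. (-1) ^ (j - i) * int (n choose (m + j)) * int (j choose i))"

lemma alt_choose_sum_0: "alt_choose_sum n 0 i = (if n = i then 1 else 0)"
proof (cases "i \<le> n")
  case False then show ?thesis by (simp add: alt_choose_sum_def)
next
  case True
  have "alt_choose_sum n 0 i
      = (\<Sum>j = i..n. (-1) ^ (j - i) * int (n choose i) * int ((n - i) choose (j - i)))"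
    unfolding alt_choose_sum_def
  proof (rule sum.cong[OF refl])
    fix j assume j: "j \<in> {i..n}"
    have "(n choose j) * (j choose i) = (n choose i) * ((n - i) choose (j - i))"
      using choose_mult[of i j n] j by simp
    then have "int (n choose j) * int (j choose i)
        = int (n choose i) * int ((n - i) choose (j - i))"
      by (metis of_nat_mult)
    then show "(-1) ^ (j - i) * int (n choose (0 + j)) * int (j choose i) =
          (-1) ^ (j - i) * int (n choose i) * int ((n - i) choose (j - i))"
      by (simp add: mult.assoc)
  qed
  also have "\<dots> = int (n choose i) * (\<Sum>j = i..n. (-1) ^ (j - i) * int ((n - i) choose (j - i)))"
    by (simp add: sum_distrib_left mult.commute mult.left_commute)
  also have "(\<Sum>j = i..n. (-1) ^ (j - i) * int ((n - i) choose (j - i)))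
      = (\<Sum>k\<le>n - i. (-1) ^ k * int ((n - i) choose k))"
    by (rule sum.reindex_bij_witness[of _ "\<lambda>k. k + i" "\<lambda>j. j - i"]) (use True in auto)
  also have "\<dots> = (if n = i then 1 else 0)"
  proof (cases "n = i")
    case True then show ?thesis by simp
  next
    case False
    then have "n - i > 0" using \<open>i \<le> n\<close> by simp
    then show ?thesis using choose_alternating_sum[of "n - i", where 'a=int] False by simp
  qed
  finally show ?thesis by simp
qed

lemma alt_choose_sum_Suc_Suc:
  "alt_choose_sum (Suc n) (Suc m) i = alt_choose_sum n (Suc m) i + alt_choose_sum n m i"
proof (cases "i \<le> Suc n")
  case False then show ?thesis by (simp add: alt_choose_sum_def)
next
  case True
  have "alt_choose_sum (Suc n) (Suc m) i
      = (\<Sum>j = i..n. (-1) ^ (j - i) * int (Suc n choose (Suc m + j)) * int (j choose i))"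
  proof -
    have "{i..Suc n} = insert (Suc n) {i..n}" using True by auto
    then show ?thesis unfolding alt_choose_sum_def by (simp add: binomial_eq_0)
  qed
  also have "\<dots> = (\<Sum>j = i..n. (-1) ^ (j - i) * int (n choose (Suc m + j)) * int (j choose i)
       + (-1) ^ (j - i) * int (n choose (m + j)) * int (j choose i))"
    by (rule sum.cong[OF refl]) (simp add: algebra_simps)
  also have "\<dots> = alt_choose_sum n (Suc m) i + alt_choose_sum n m i"
    unfolding alt_choose_sum_def by (simp add: sum.distrib)
  finally show ?thesis .
qed

lemma alt_choose_sum_Suc:
  "alt_choose_sum n (Suc m) i = (if i < n then int ((n - i - 1) choose m) else 0)"
proof (induction n arbitrary: m)
  case 0
  then show ?case by (cases i) (auto simp: alt_choose_sum_def)
next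
  case (Suc n)
  then show ?case
  proof (cases m)
    case 0
    then show ?thesis using Suc.IH[of 0] by (simp add: alt_choose_sum_Suc_Suc alt_choose_sum_0)
  next
    case (Suc m')
    have "n - i = Suc (n - i - 1)" if "i < n" using that by simp
    then show ?thesis
      using Suc.IH[of m] Suc.IH[of m'] by (auto simp: Suc alt_choose_sum_Suc_Suc)
  qed
qed

lemma alpha_add_choose:
  assumes "0 < d" "d < n" "i \<le> n - d"
  shows "alpha i n d + int ((n - 1 - i) choose (d - 1)) = int ((n - i) choose (d - 1))"
proof -
  have "alpha i n d
      = (\<Sum>j = i..n - d + 1. (-1) ^ (j - i) * int (n choose (d - 1 + j)) * int (j choose i))"
    unfolding alpha_def using assms by (simp add: add.commute)
  also have "\<dots> = alt_choose_sum n (d - 1) i"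
    unfolding alt_choose_sum_def by (rule sum.mono_neutral_left) (use assms in auto)
  finally have alpha: "alpha i n d = alt_choose_sum n (d - 1) i" .
  have "i < n" "n - i = Suc (n - 1 - i)" using assms by simp_all
  then show ?thesis
    unfolding alpha using assms
    by (cases "d - 1") (simp_all add: alt_choose_sum_0 alt_choose_sum_Suc)
qed
section \<open>Macaulay representations and M-sequences\<close>

lemma binomial_Suc_left: "1 \<le> i \<Longrightarrow> Suc x choose i = (x choose (i - 1)) + (x choose i)"
  by (cases i) auto

definition macaulay_list :: "nat list \<Rightarrow> nat \<Rightarrow> bool" where
  "macaulay_list as i \<longleftrightarrow> as \<noteq> [] \<and> length as \<le> i \<and> sorted_wrt (>) as \<and> last as \<ge> i + 1 - length as"

definition macaulay_sum :: "nat list \<Rightarrow> nat \<Rightarrow> nat" where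
  "macaulay_sum as i = (\<Sum>t < length as. (as ! t) choose (i - t))"

lemma macaulay_rep_iff: "macaulay_rep a i as \<longleftrightarrow> macaulay_list as i \<and> a = macaulay_sum as i"
  by (simp add: macaulay_rep_def macaulay_list_def macaulay_sum_def)

lemma macaulay_sum_Nil [simp]: "macaulay_sum [] i = 0"
  by (simp add: macaulay_sum_def)

lemma macaulay_sum_Cons: "macaulay_sum (x # xs) i = (x choose i) + macaulay_sum xs (i - 1)"
proof -
  have "macaulay_sum (x # xs) i = (x choose i) + (\<Sum>t<length xs. xs ! t choose (i - Suc t))"
    unfolding macaulay_sum_def
      by (simp only: length_Cons sum.lessThan_Suc_shift nth_Cons_0 nth_Cons_Suc diff_zero)
  also have "(\<Sum>t<length xs. xs ! t choose (i - Suc t)) = macaulay_sum xs (i - 1)"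
    unfolding macaulay_sum_def by (rule sum.cong) auto
  finally show ?thesis .
qed

lemma macaulay_list_single: "macaulay_list [x] i \<longleftrightarrow> 1 \<le> i \<and> i \<le> x"
  by (auto simp: macaulay_list_def)

lemma macaulay_list_ConsD:
  assumes "macaulay_list (x # y # r) i"
  shows "macaulay_list (y # r) (i - 1)" "y < x" "1 \<le> i"
  using assms by (auto simp: macaulay_list_def)

lemma macaulay_list_ConsI:
  assumes "macaulay_list (y # r) (i - 1)" "y < x" "2 \<le> i"
  shows "macaulay_list (x # y # r) i"
proof -
  have "\<forall>z\<in>set r. z < y" using assms(1) by (simp add: macaulay_list_def)
  then have "\<forall>z\<in>set (y # r). z < x" using assms(2) by auto
  then show ?thesis using assms by (auto simp: macaulay_list_def)
qed

lemma macaulay_list_hd_ge: "macaulay_list as i \<Longrightarrow> i \<le> hd as"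
proof (induction as arbitrary: i)
  case Nil then show ?case by (simp add: macaulay_list_def)
next
  case (Cons x xs)
  show ?case
  proof (cases xs)
    case Nil then show ?thesis using Cons.prems by (simp add: macaulay_list_single)
  next
    case (Cons y r)
    have v: "macaulay_list (y # r) (i - 1)" "y < x" "1 \<le> i"
      using macaulay_list_ConsD Cons.prems \<open>xs = y # r\<close> by auto
    have "i - 1 \<le> y" using Cons.IH[of "i - 1"] v \<open>xs = y # r\<close> by simp
    then show ?thesis using v by simp
  qed
qed

lemma choose_hd_le_macaulay_sum: "macaulay_list as i \<Longrightarrow> hd as choose i \<le> macaulay_sum as i"
  by (cases as) (auto simp: macaulay_sum_Cons macaulay_list_def)

lemma macaulay_sum_pos: "macaulay_list as i \<Longrightarrow> 0 < macaulay_sum as i"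
proof -
  assume v: "macaulay_list as i"
  have "0 < hd as choose i" using macaulay_list_hd_ge[OF v] zero_less_binomial by blast
  then show ?thesis using choose_hd_le_macaulay_sum[OF v] by linarith
qed

lemma macaulay_sum_less: "macaulay_list as i \<Longrightarrow> macaulay_sum as i < Suc (hd as) choose i"
proof (induction as arbitrary: i)
  case Nil then show ?case by (simp add: macaulay_list_def)
next
  case (Cons x xs)
  show ?case
  proof (cases xs)
    case Nil
    then have i: "1 \<le> i" "i \<le> x" using Cons.prems by (auto simp: macaulay_list_single)
    have "0 < x choose (i - 1)" using i by simp
    then show ?thesis using Nil binomial_Suc_left[OF i(1), of x] by (simp add: macaulay_sum_Cons)
  next
    case (Cons y r)
    have v: "macaulay_list (y # r) (i - 1)" "y < x" "1 \<le> i"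
      using macaulay_list_ConsD Cons.prems \<open>xs = y # r\<close> by auto
    have "macaulay_sum xs (i - 1) < Suc y choose (i - 1)" using Cons.IH v \<open>xs = y # r\<close> by simp
    also have "\<dots> \<le> x choose (i - 1)" using v by (intro binomial_right_mono) simp
    finally have "macaulay_sum xs (i - 1) < x choose (i - 1)" .
    then show ?thesis using binomial_Suc_left[OF v(3), of x] by (simp add: macaulay_sum_Cons)
  qed
qed

lemma macaulay_list_hd_unique:
  assumes "macaulay_list as i" "macaulay_list bs i" "macaulay_sum as i = macaulay_sum bs i"
  shows "hd as = hd bs"
proof (rule ccontr)
  assume ne: "hd as \<noteq> hd bs"
  have "\<not> hd as < hd bs"
    if "macaulay_list as i" "macaulay_list bs i" "macaulay_sum as i = macaulay_sum bs i" for as bs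
  proof
    assume lt: "hd as < hd bs"
    have "macaulay_sum as i < Suc (hd as) choose i" using macaulay_sum_less[OF that(1)] .
    also have "\<dots> \<le> hd bs choose i" using lt by (intro binomial_right_mono) simp
    also have "\<dots> \<le> macaulay_sum bs i" using choose_hd_le_macaulay_sum[OF that(2)] .
    finally show False using that(3) by simp
  qed
  then show False using assms ne by (metis linorder_neqE_nat)
qed

lemma macaulay_list_unique:
  "macaulay_list as i \<Longrightarrow> macaulay_list bs i \<Longrightarrow> macaulay_sum as i = macaulay_sum bs i \<Longrightarrow> as = bs"
proof (induction as arbitrary: bs i)
  case Nil then show ?case by (simp add: macaulay_list_def)
next
  case (Cons x xs)
  obtain y ys where bs: "bs = y # ys"
    using Cons.prems(2) by (cases bs) (auto simp: macaulay_list_def)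
  have xy: "x = y" using macaulay_list_hd_unique[OF Cons.prems] bs by simp
  have tails: "macaulay_sum xs (i - 1) = macaulay_sum ys (i - 1)"
    using Cons.prems(3) bs xy by (simp add: macaulay_sum_Cons)
  show ?case
  proof (cases xs)
    case Nil
    show ?thesis
    proof (cases ys)
      case Nil then show ?thesis using \<open>xs = []\<close> bs xy by simp
    next
      case (Cons z zs)
      then have "macaulay_list ys (i - 1)" using macaulay_list_ConsD Cons.prems(2) bs by simp
      then have "0 < macaulay_sum ys (i - 1)" by (rule macaulay_sum_pos)
      then show ?thesis using tails \<open>xs = []\<close> by simp
    qed
  next
    case (Cons z zs)
    then have vx: "macaulay_list xs (i - 1)" using macaulay_list_ConsD Cons.prems(1) by simp
    show ?thesis
    proof (cases ys)
      case Nil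
      have "0 < macaulay_sum xs (i - 1)" using vx by (rule macaulay_sum_pos)
      then show ?thesis using tails Nil by simp
    next
      case (Cons w ws)
      then have vy: "macaulay_list ys (i - 1)" using macaulay_list_ConsD Cons.prems(2) bs by simp
      have "xs = ys" using Cons.IH[OF vx vy tails] .
      then show ?thesis using bs xy by simp
    qed
  qed
qed

lemma binomial_ge_diff: "1 \<le> i \<Longrightarrow> i \<le> x \<Longrightarrow> x - i + 1 \<le> (x choose i)"
proof (induction x arbitrary: i)
  case 0 then show ?case by simp
next
  case (Suc x)
  show ?case
  proof (cases "i = Suc x")
    case True then show ?thesis by simp
  next
    case False
    then have ix: "i \<le> x" using Suc by simp
    have "x - i + 1 \<le> (x choose i)" using Suc.IH[OF Suc.prems(1) ix] .
    moreover have "1 \<le> x choose (i - 1)" using ix zero_less_binomial[of "i - 1" x] by linarith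
    ultimately show ?thesis using binomial_Suc_left[OF Suc.prems(1), of x] ix by simp
  qed
qed

lemma binomial_bracket:
  assumes "0 < a" "1 \<le> i"
  obtains x where "i \<le> x" "x choose i \<le> a" "a < Suc x choose i"
proof -
  have "a + i - i + 1 \<le> (a + i) choose i" using binomial_ge_diff[of i "a + i"] assms by simp
  also have "\<dots> \<le> Suc (a + i) choose i" by (intro binomial_right_mono) simp
  finally have ex: "a < Suc (a + i) choose i" by simp
  define x where "x = (LEAST x. a < Suc x choose i)"
  have x_upper: "a < Suc x choose i"
    unfolding x_def by (rule LeastI[of "\<lambda>x. a < Suc x choose i", OF ex])
  have "i \<le> x"
  proof (rule ccontr)
    assume "\<not> i \<le> x"
    then have "Suc x choose i \<le> 1"
      by (cases "Suc x = i") (auto simp: binomial_eq_0)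
    then show False using x_upper assms(1) by simp
  qed
  moreover have "\<not> a < Suc (x - 1) choose i"
    using not_less_Least[of "x - 1" "\<lambda>x. a < Suc x choose i"] \<open>i \<le> x\<close> assms(2)
    unfolding x_def by simp
  then have "x choose i \<le> a" using \<open>i \<le> x\<close> assms(2) by simp
  ultimately show ?thesis using that x_upper by blast
qed

text \<open>
  Existence by the greedy algorithm: take the largest \<open>x\<close> with \<open>x choose i \<le> a\<close> and recurse on
  the rest.
\<close>

lemma macaulay_list_exists:
  "0 < a \<Longrightarrow> 1 \<le> i \<Longrightarrow> \<exists>as. macaulay_list as i \<and> macaulay_sum as i = a"
proof (induction i arbitrary: a rule: less_induct)
  case (less i)
  obtain x where x: "i \<le> x" "x choose i \<le> a" "a < Suc x choose i"
    using binomial_bracket[OF less.prems] .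
  define r where "r = a - (x choose i)"
  have r_lt: "r < x choose (i - 1)"
    using x binomial_Suc_left[OF less.prems(2), of x] unfolding r_def by simp
  show ?case
  proof (cases "r = 0")
    case True
    then have "macaulay_list [x] i" "macaulay_sum [x] i = a"
      using x less.prems unfolding r_def by (auto simp: macaulay_list_single macaulay_sum_Cons)
    then show ?thesis by blast
  next
    case False
    then have i2: "2 \<le> i" using r_lt less.prems(2) by (cases "i = 1") auto
    obtain bs where bs: "macaulay_list bs (i - 1)" "macaulay_sum bs (i - 1) = r"
      using less.IH[of "i - 1" r] i2 False by fastforce
    obtain y ys where bs_Cons: "bs = y # ys" using bs by (cases bs) (auto simp: macaulay_list_def)
    have "y choose (i - 1) < x choose (i - 1)"
      using choose_hd_le_macaulay_sum[OF bs(1)] bs(2) bs_Cons r_lt by simp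
    then have "y < x" using binomial_right_mono[of x y "i - 1"] by (meson leI not_le)
    then have "macaulay_list (x # bs) i"
      using macaulay_list_ConsI[of y ys i x] bs(1) bs_Cons i2 by simp
    moreover have "macaulay_sum (x # bs) i = a"
      using bs(2) x(2) unfolding r_def by (simp add: macaulay_sum_Cons)
    ultimately show ?thesis by blast
  qed
qed

lemma macaulay_rep_The:
  assumes "0 < a" "1 \<le> i"
  shows "macaulay_rep a i (THE as. macaulay_rep a i as)"
proof -
  obtain as where as: "macaulay_list as i" "macaulay_sum as i = a"
    using macaulay_list_exists[OF assms] by blast
  have "\<exists>!as. macaulay_rep a i as"
  proof
    show "macaulay_rep a i as" using as by (simp add: macaulay_rep_iff)
  next
    fix bs assume "macaulay_rep a i bs"
    then show "bs = as" using macaulay_list_unique[of bs i as] as by (simp add: macaulay_rep_iff)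
  qed
  then show ?thesis by (rule theI')
qed

lemma mac_upper_eq_macaulay_sum:
  assumes "0 < a" "1 \<le> i" "macaulay_list as i" "macaulay_sum as i = a"
  shows "mac_upper a i = macaulay_sum (map Suc as) (Suc i)"
proof -
  have "(THE as. macaulay_rep a i as) = as"
  proof -
    have "macaulay_rep a i (THE as. macaulay_rep a i as)" using macaulay_rep_The[OF assms(1,2)] .
    then have v: "macaulay_list (THE as. macaulay_rep a i as) i"
        "macaulay_sum (THE as. macaulay_rep a i as) i = a"
      by (auto simp: macaulay_rep_iff)
    show ?thesis using macaulay_list_unique[OF v(1) assms(3)] v(2) assms(4) by simp
  qed
  moreover have "(\<Sum>t < length as. (as ! t + 1) choose (i - t + 1))
      = macaulay_sum (map Suc as) (Suc i)"
    unfolding macaulay_sum_def length_map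
  proof (rule sum.cong[OF refl])
    fix t assume "t \<in> {..<length as}"
    then have t: "t < length as" "t \<le> i" using assms(3) by (auto simp: macaulay_list_def)
    have "i - t + 1 = Suc i - t" using t(2) by simp
    then show "(as ! t + 1) choose (i - t + 1) = (map Suc as ! t) choose (Suc i - t)"
      using t(1) by simp
  qed
  ultimately show ?thesis using assms(1) by (simp add: mac_upper_def Let_def)
qed

lemma macaulay_list_map_Suc: "macaulay_list as i \<Longrightarrow> macaulay_list (map Suc as) (Suc i)"
  by (auto simp: macaulay_list_def sorted_wrt_map last_map)

lemma mac_upper_less_choose:
  assumes "1 \<le> k" "a < b choose k"
  shows "mac_upper a k < Suc b choose Suc k"
proof (cases "a = 0")
  case True
  have "k \<le> b" using assms by (metis binomial_eq_0 not_less0 not_le)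
  then have "0 < Suc b choose Suc k" by simp
  then show ?thesis using True by (simp add: mac_upper_def)
next
  case False
  then obtain as where as: "macaulay_list as k" "macaulay_sum as k = a"
    using macaulay_list_exists assms by blast
  have hb: "hd as < b"
  proof (rule ccontr)
    assume "\<not> hd as < b"
    then have "b choose k \<le> hd as choose k" by (intro binomial_right_mono) simp
    then show False using choose_hd_le_macaulay_sum[OF as(1)] as(2) assms(2) by simp
  qed
  have "mac_upper a k = macaulay_sum (map Suc as) (Suc k)"
    using mac_upper_eq_macaulay_sum[OF _ assms(1) as] False by simp
  also have "\<dots> < Suc (hd (map Suc as)) choose Suc k"
    using macaulay_sum_less[OF macaulay_list_map_Suc[OF as(1)]] .
  also have "\<dots> \<le> Suc b choose Suc k"
  proof -
    have "as \<noteq> []" using as by (simp add: macaulay_list_def)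
    then have "Suc (hd (map Suc as)) \<le> Suc b" using hb by (simp add: hd_map)
    then show ?thesis by (rule binomial_right_mono)
  qed
  finally show ?thesis .
qed

lemma mac_upper_choose:
  assumes "1 \<le> k" "k \<le> b"
  shows "mac_upper (b choose k) k = Suc b choose Suc k"
proof -
  have v: "macaulay_list [b] k" "macaulay_sum [b] k = b choose k"
    using assms by (auto simp: macaulay_list_single macaulay_sum_Cons)
  have "0 < b choose k" using assms by simp
  then show ?thesis
    using mac_upper_eq_macaulay_sum[OF _ assms(1) v] by (simp add: macaulay_sum_Cons)
qed

lemma mac_upper_le_choose:
  assumes "1 \<le> k" "k \<le> b" "a \<le> b choose k"
  shows "mac_upper a k \<le> Suc b choose Suc k"
proof (cases "a = b choose k")
  case True then show ?thesis using mac_upper_choose[OF assms(1,2)] by simp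
next
  case False
  then have "a < b choose k" using assms(3) by simp
  then show ?thesis using mac_upper_less_choose[OF assms(1), of a b] by simp
qed

lemma mac_upper_0: "mac_upper 0 k = 0" by (simp add: mac_upper_def)

lemma M_sequence_le_choose:
  assumes d: "0 < d" and M: "M_sequence l m" and l1: "l 1 \<le> d"
  shows "k \<le> m \<Longrightarrow> l k \<le> (d - 1 + k) choose k"
proof (induction k)
  case 0 then show ?case using M by (simp add: M_sequence_def)
next
  case (Suc k)
  show ?case
  proof (cases k)
    case 0 then show ?thesis using l1 d by simp
  next
    case (Suc k')
    have lk: "l k \<le> (d - 1 + k) choose k" using Suc.IH Suc.prems by simp
    have "l (Suc k) \<le> mac_upper (l k) k"
      using M Suc.prems \<open>k = Suc k'\<close> by (simp add: M_sequence_def)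
    also have "\<dots> \<le> Suc (d - 1 + k) choose Suc k"
      using mac_upper_le_choose[OF _ _ lk] \<open>k = Suc k'\<close> by simp
    also have "Suc (d - 1 + k) = d - 1 + Suc k" by simp
    finally show ?thesis by simp
  qed
qed

lemma M_sequence_choose_pred:
  assumes d: "0 < d" and M: "M_sequence l m" and l1: "l 1 \<le> d"
    and k: "Suc k \<le> m" and eq: "l (Suc k) = (d - 1 + Suc k) choose Suc k"
  shows "l k = (d - 1 + k) choose k"
proof (cases k)
  case 0 then show ?thesis using M by (simp add: M_sequence_def)
next
  case (Suc k')
  have le: "l k \<le> (d - 1 + k) choose k" using M_sequence_le_choose[OF d M l1] k by simp
  show ?thesis
  proof (rule ccontr)
    assume "l k \<noteq> (d - 1 + k) choose k"
    then have lt: "l k < (d - 1 + k) choose k" using le by simp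
    have "l (Suc k) \<le> mac_upper (l k) k" using M k Suc by (simp add: M_sequence_def)
    also have "\<dots> < Suc (d - 1 + k) choose Suc k" using mac_upper_less_choose[OF _ lt] Suc by simp
    finally show False using eq by simp
  qed
qed

lemma M_sequence_zero_Suc:
  assumes M: "M_sequence l m" and k: "1 \<le> k" "Suc k \<le> m" and z: "l k = 0"
  shows "l (Suc k) = 0"
proof -
  have "l (Suc k) \<le> mac_upper (l k) k" using M k by (simp add: M_sequence_def)
  then show ?thesis using z by (simp add: mac_upper_0)
qed

lemma M_sequence_drop_choose_iff:
  assumes d: "0 < d" and M: "M_sequence l m" and l1: "l 1 \<le> d" and r: "r < m"
  shows "int (l r) - int (l (Suc r)) = int ((d - 1 + r) choose r) \<longleftrightarrow>
         (\<forall>k\<le>r. l k = (d - 1 + k) choose k) \<and> (\<forall>k. r < k \<and> k \<le> m \<longrightarrow> l k = 0)"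
proof
  assume h: "int (l r) - int (l (Suc r)) = int ((d - 1 + r) choose r)"
  have "l r \<le> (d - 1 + r) choose r" using M_sequence_le_choose[OF d M l1] r by simp
  then have lr: "l r = (d - 1 + r) choose r" and lr1: "l (Suc r) = 0" using h by auto
  show "(\<forall>k\<le>r. l k = (d - 1 + k) choose k) \<and> (\<forall>k. r < k \<and> k \<le> m \<longrightarrow> l k = 0)"
  proof (intro conjI allI impI)
    fix k assume "k \<le> r"
    then show "l k = (d - 1 + k) choose k"
    proof (induction k rule: inc_induct)
      case (step k)
      then show ?case using M_sequence_choose_pred[OF d M l1, of k] r by simp
    qed (rule lr)
  next
    fix k assume "r < k \<and> k \<le> m"
    then have "Suc r \<le> k" "k \<le> m" by auto
    then show "l k = 0"
    proof (induction k rule: dec_induct)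
      case (step k)
      then show ?case using M_sequence_zero_Suc[OF M, of k] r by simp
    qed (use lr1 in simp)
  qed
next
  assume "(\<forall>k\<le>r. l k = (d - 1 + k) choose k) \<and> (\<forall>k. r < k \<and> k \<le> m \<longrightarrow> l k = 0)"
  then have "l r = (d - 1 + r) choose r" "l (Suc r) = 0" using r by auto
  then show "int (l r) - int (l (Suc r)) = int ((d - 1 + r) choose r)" by simp
qed

lemma all_le_diff_reflect:
  fixes i m :: nat
  assumes "i \<le> m"
  shows "(\<forall>k\<le>m - i. P k) \<longleftrightarrow> (\<forall>j. i \<le> j \<and> j \<le> m \<longrightarrow> P (m - j))"
proof
  assume h: "\<forall>j. i \<le> j \<and> j \<le> m \<longrightarrow> P (m - j)"
  show "\<forall>k\<le>m - i. P k"
  proof (intro allI impI)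
    fix k assume k: "k \<le> m - i"
    have "m - (m - k) = k" using k assms by arith
    moreover have "i \<le> m - k \<and> m - k \<le> m" using k assms by arith
    ultimately show "P k" using h by metis
  qed
qed auto

lemma all_gt_diff_reflect:
  fixes i m :: nat
  assumes "i \<le> m"
  shows "(\<forall>k. m - i < k \<and> k \<le> m \<longrightarrow> P k) \<longleftrightarrow> (\<forall>j<i. P (m - j))"
proof
  assume h: "\<forall>j<i. P (m - j)"
  show "\<forall>k. m - i < k \<and> k \<le> m \<longrightarrow> P k"
  proof (intro allI impI)
    fix k assume k: "m - i < k \<and> k \<le> m"
    have "m - (m - k) = k" using k by arith
    moreover have "m - k < i" using k assms by arith
    ultimately show "P k" using h by metis
  qed
qed (use assms in auto)

lemma M_sequence_drop_extremal_iff: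
  assumes d: "0 < d" and i: "1 \<le> i" "i \<le> n - d"
    and M: "M_sequence l (n - d)" and l1: "l 1 \<le> d"
  shows "int (l (n - d - i)) - int (l (n - d - i + 1)) = int ((n - 1 - i) choose (d - 1)) \<longleftrightarrow>
     (\<forall>j. i \<le> j \<and> j \<le> n - d \<longrightarrow> l (n - d - j) = (n - 1 - j) choose (d - 1))
       \<and> (\<forall>j < i. l (n - d - j) = 0)"
proof -
  have choose_eq: "(n - 1 - j) choose (d - 1) = (d - 1 + (n - d - j)) choose (n - d - j)"
    if "j \<le> n - d" for j
  proof -
    have "n - 1 - j = d - 1 + (n - d - j)" using that d i by simp
    then show ?thesis using binomial_symmetric[of "d - 1" "d - 1 + (n - d - j)"] by simp
  qed
  have "(\<forall>k\<le>n - d - i. l k = (d - 1 + k) choose k)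
      \<longleftrightarrow> (\<forall>j. i \<le> j \<and> j \<le> n - d \<longrightarrow> l (n - d - j) = (n - 1 - j) choose (d - 1))"
    using all_le_diff_reflect[OF i(2), of "\<lambda>k. l k = (d - 1 + k) choose k"] choose_eq by auto
  moreover have "(\<forall>k. n - d - i < k \<and> k \<le> n - d \<longrightarrow> l k = 0) \<longleftrightarrow> (\<forall>j < i. l (n - d - j) = 0)"
    by (rule all_gt_diff_reflect[OF i(2)])
  moreover have "n - d - i < n - d" using i by simp
  ultimately show ?thesis
    using M_sequence_drop_choose_iff[OF d M l1, of "n - d - i"] choose_eq[OF i(2)] by simp
qed

theorem corollary4p4:
  fixes n d i :: nat
  assumes "0 < d" and "d < n" and "1 \<le> i" and "i \<le> n - d"
  shows "int (Max {lam d C i | C. chordal_clutter n d C \<and> C \<noteq> all_dsets n d})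
           = alpha i n d + int ((n - 1 - i) choose (d - 1))
       \<and> (\<forall>C l. chordal_clutter n d C \<and> M_sequence l (n - d) \<and> l 1 \<le> d \<and>
            (\<forall>k < n - d. int (lam d C (n - d - k)) = alpha (n - d - k) n d + int (l k) - int (l (k + 1)))
          \<longrightarrow> (int (lam d C i) = alpha i n d + int ((n - 1 - i) choose (d - 1))
               \<longleftrightarrow> (\<forall>j. i \<le> j \<and> j \<le> n - d \<longrightarrow> l (n - d - j) = (n - 1 - j) choose (d - 1))
                 \<and> (\<forall>j < i. l (n - d - j) = 0)))"
proof (intro conjI allI impI)
  show "int (Max {lam d C i | C. chordal_clutter n d C \<and> C \<noteq> all_dsets n d})
      = alpha i n d + int ((n - 1 - i) choose (d - 1))"
    using Max_lam[OF assms] alpha_add_choose[OF assms(1,2,4)] by simp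
next
  fix C l
  assume h: "chordal_clutter n d C \<and> M_sequence l (n - d) \<and> l 1 \<le> d \<and>
    (\<forall>k < n - d. int (lam d C (n - d - k)) = alpha (n - d - k) n d + int (l k) - int (l (k + 1)))"
  have "n - d - i < n - d" "n - d - (n - d - i) = i" using assms by simp_all
  then have "int (lam d C i) = alpha i n d + int (l (n - d - i)) - int (l (n - d - i + 1))"
    using h by metis
  then show "int (lam d C i) = alpha i n d + int ((n - 1 - i) choose (d - 1))
      \<longleftrightarrow> (\<forall>j. i \<le> j \<and> j \<le> n - d \<longrightarrow> l (n - d - j) = (n - 1 - j) choose (d - 1))
        \<and> (\<forall>j < i. l (n - d - j) = 0)"
    using M_sequence_drop_extremal_iff[OF assms(1,3,4)] h by auto
qed

end
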